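(* Let $S$ be a memory system satisfying the Causality assumption, let $n,m,v\ge1$, and let $\Omega$ be a witness for $S(n,m,v)$. For every unambiguous trace $\tau$ of $S(n,m,v)$ and every location $1\le i\le m$, the relation $\Omega^e(\tau,i)$ is a (strict) partial order on $L(\tau,i)$, i.e. it is irreflexive, antisymmetric and transitive.
   Context: Notation: $\mathbb{N}_n=\{1,\dots,n\}$, $\mathbb{W}_n=\{0,\dots,n\}$. Memory events $E(n,m,v)=\{R,W\}\times\mathbb{N}_n\times\mathbb{N}_m\times\mathbb{W}_v$; for $e=\langle a,b,c,d\rangle$, $op(e)=a$, $proc(e)=b$, $loc(e)=c$, $data(e)=d$; $0$ models the initial value of every location. A memory system is a family $S=(S(n,m,v))_{n,m,v\ge1}$, $S(n,m,v)$ a regular set of finite runs over an alphabet $E^a(n,m,v)\supseteq E(n,m,v)$ (other letters are internal events). The trace of a run is its subsequence of memory events; traces of $S(n,m,v)$ are traces of its runs. For a sequence $\tau$ of memory events: $L(\tau,j)=\{k: loc(\tau(k))=j\}$, $L^w(\tau,j)=\{k\in L(\tau,j): op(\tau(k))=W\}$, $L^r(\tau,j)=\{k\in L(\tau,j): op(\tau(k))=R\}$. A trace $\tau$ is unambiguous if for every location $j$ and $x\in L^w(\tau,j)$, $data(\tau(x))\ne0$ and $data(\tau(x))\ne data(\tau(y))$ for all $y\in L^w(\tau,j)\setminus\{x\}$. Causality assumption: for all $n,m,v\ge1$, every trace $\tau$ of $S(n,m,v)$, every location $j$ and every $x\in L^r(\tau,j)$, either $data(\tau(x))=0$ or there is $y\in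 L^w(\tau,j)$ with $data(\tau(x))=data(\tau(y))$. A witness $\Omega$ for $S(n,m,v)$ assigns to every trace $\tau$ of $S(n,m,v)$ and location $j$ a strict total order $\Omega(\tau,j)$ on $L^w(\tau,j)$. For an unambiguous trace $\tau$, the relation $\Omega^e(\tau,j)\subseteq L(\tau,j)\times L(\tau,j)$ is defined by: $\langle x,y\rangle\in\Omega^e(\tau,j)$ iff (1) $data(\tau(x))=data(\tau(y))$, $op(\tau(x))=W$ and $op(\tau(y))=R$; or (2) $data(\tau(x))=0$ and $data(\tau(y))\ne0$; or (3) there are $a,b\in L^w(\tau,j)$ with $\langle a,b\rangle\in\Omega(\tau,j)$, $data(\tau(a))=data(\tau(x))$ and $data(\tau(b))=data(\tau(y))$. *)

theory Defs
  imports Main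
begin

datatype mop = R | W

type_synonym event = "mop \<times> nat \<times> nat \<times> nat"

definition opr :: "event \<Rightarrow> mop" where "opr e = fst e"
definition proc :: "event \<Rightarrow> nat" where "proc e = fst (snd e)"
definition loc :: "event \<Rightarrow> nat" where "loc e = fst (snd (snd e))"
definition dat :: "event \<Rightarrow> nat" where "dat e = snd (snd (snd e))"

definition Ev :: "nat \<Rightarrow> nat \<Rightarrow> nat \<Rightarrow> event set" where
  "Ev n m v = UNIV \<times> {1..n} \<times> {1..m} \<times> {0..v}"

datatype 'i letter = Mem event | Internal 'i

definition alphabet :: "event set \<Rightarrow> 'i set \<Rightarrow> 'i letter set" where
  "alphabet E I = Mem ` E \<union> Internal ` I"

definition regular_over :: "'a set \<Rightarrow> 'a list set \<Rightarrow> bool" where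
  "regular_over A L \<longleftrightarrow>
     (\<exists>(Q :: nat set) q0 (\<delta> :: nat \<Rightarrow> 'a \<Rightarrow> nat) F.
        finite Q \<and> q0 \<in> Q \<and> F \<subseteq> Q \<and> (\<forall>q\<in>Q. \<forall>a\<in>A. \<delta> q a \<in> Q) \<and>
        L = {w \<in> lists A. foldl \<delta> q0 w \<in> F})"

definition memory_system :: "(nat \<Rightarrow> nat \<Rightarrow> nat \<Rightarrow> 'i letter list set) \<Rightarrow> (nat \<Rightarrow> nat \<Rightarrow> nat \<Rightarrow> 'i set) \<Rightarrow> bool" where
  "memory_system S I \<longleftrightarrow>
     (\<forall>n m v. n \<ge> 1 \<longrightarrow> m \<ge> 1 \<longrightarrow> v \<ge> 1 \<longrightarrow>
        finite (I n m v) \<and> regular_over (alphabet (Ev n m v) (I n m v)) (S n m v))"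

fun trace :: "'i letter list \<Rightarrow> event list" where
  "trace [] = []"
| "trace (Mem e # r) = e # trace r"
| "trace (Internal _ # r) = trace r"

definition traces :: "'i letter list set \<Rightarrow> event list set" where
  "traces T = trace ` T"

text \<open>Positions are 0-based list indices.\<close>
definition Lpos :: "event list \<Rightarrow> nat \<Rightarrow> nat set" where
  "Lpos \<tau> j = {k. k < length \<tau> \<and> loc (\<tau> ! k) = j}"
definition Lw :: "event list \<Rightarrow> nat \<Rightarrow> nat set" where
  "Lw \<tau> j = {k \<in> Lpos \<tau> j. opr (\<tau> ! k) = W}"
definition Lr :: "event list \<Rightarrow> nat \<Rightarrow> nat set" where
  "Lr \<tau> j = {k \<in> Lpos \<tau> j. opr (\<tau> ! k) = R}"

definition unambiguous :: "event list \<Rightarrow> bool" where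
  "unambiguous \<tau> \<longleftrightarrow>
     (\<forall>j. \<forall>x\<in>Lw \<tau> j. dat (\<tau> ! x) \<noteq> 0 \<and>
        (\<forall>y\<in>Lw \<tau> j - {x}. dat (\<tau> ! x) \<noteq> dat (\<tau> ! y)))"

definition causality :: "(nat \<Rightarrow> nat \<Rightarrow> nat \<Rightarrow> 'i letter list set) \<Rightarrow> bool" where
  "causality S \<longleftrightarrow>
     (\<forall>n m v. n \<ge> 1 \<longrightarrow> m \<ge> 1 \<longrightarrow> v \<ge> 1 \<longrightarrow>
        (\<forall>\<tau>\<in>traces (S n m v). \<forall>j. \<forall>x\<in>Lr \<tau> j.
           dat (\<tau> ! x) = 0 \<or> (\<exists>y\<in>Lw \<tau> j. dat (\<tau> ! x) = dat (\<tau> ! y))))"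

definition strict_total_order_on :: "'a set \<Rightarrow> ('a \<times> 'a) set \<Rightarrow> bool" where
  "strict_total_order_on A r \<longleftrightarrow>
     r \<subseteq> A \<times> A \<and> irrefl r \<and> trans r \<and> total_on A r"

definition witness :: "(nat \<Rightarrow> nat \<Rightarrow> nat \<Rightarrow> 'i letter list set) \<Rightarrow> nat \<Rightarrow> nat \<Rightarrow> nat
     \<Rightarrow> (event list \<Rightarrow> nat \<Rightarrow> (nat \<times> nat) set) \<Rightarrow> bool" where
  "witness S n m v \<Omega> \<longleftrightarrow>
     (\<forall>\<tau>\<in>traces (S n m v). \<forall>j\<in>{1..m}. strict_total_order_on (Lw \<tau> j) (\<Omega> \<tau> j))"

definition Omega_e :: "(event list \<Rightarrow> nat \<Rightarrow> (nat \<times> nat) set) \<Rightarrow> event list \<Rightarrow> nat \<Rightarrow> (nat \<times> nat) set" where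
  "Omega_e \<Omega> \<tau> j = {(x, y). x \<in> Lpos \<tau> j \<and> y \<in> Lpos \<tau> j \<and>
     ((dat (\<tau> ! x) = dat (\<tau> ! y) \<and> opr (\<tau> ! x) = W \<and> opr (\<tau> ! y) = R)
      \<or> (dat (\<tau> ! x) = 0 \<and> dat (\<tau> ! y) \<noteq> 0)
      \<or> (\<exists>a b. a \<in> Lw \<tau> j \<and> b \<in> Lw \<tau> j \<and> (a, b) \<in> \<Omega> \<tau> j \<and>
              dat (\<tau> ! a) = dat (\<tau> ! x) \<and> dat (\<tau> ! b) = dat (\<tau> ! y)))}"

end

theory Submission
  imports Defs
begin

text \<open>\<open>\<Omega>\<^sup>e(\<tau>, j)\<close> orders the positions at location \<open>j\<close> lexicographically by (value, operation):
  values are ordered by putting the initial value \<open>0\<close> below all others and transporting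
  \<open>\<Omega>(\<tau>, j)\<close> along the data map, and a write precedes the reads of its own value.
  Unambiguity makes the data map injective on writes and keeps \<open>0\<close> out of its range, so the
  value order is again a strict order; preimages and lexicographic products of strict orders are
  strict orders.\<close>

definition with_bottom :: "'a \<Rightarrow> 'a rel \<Rightarrow> 'a rel" where
  "with_bottom z r = r \<union> {(z, y) | y. y \<noteq> z}"

lemma irrefl_with_bottom: "irrefl r \<Longrightarrow> irrefl (with_bottom z r)"
  by (auto simp: with_bottom_def irrefl_def)

lemma trans_with_bottom:
  assumes "trans r" and "z \<notin> Range r"
  shows "trans (with_bottom z r)"
  using assms unfolding with_bottom_def trans_def by blast

lemma irrefl_Restr: "irrefl r \<Longrightarrow> irrefl (Restr r A)"
  by (auto simp: irrefl_def)

lemma map_prod_image_iff: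
  "(u, v) \<in> map_prod f g ` r \<longleftrightarrow> (\<exists>a b. (a, b) \<in> r \<and> f a = u \<and> g b = v)"
  by force

lemma irrefl_map_prod_image:
  assumes "inj_on f A" and "r \<subseteq> A \<times> A" and "irrefl r"
  shows "irrefl (map_prod f f ` r)"
  using assms unfolding irrefl_def inj_on_def by blast

lemma trans_map_prod_image:
  assumes "inj_on f A" and "r \<subseteq> A \<times> A" and "trans r"
  shows "trans (map_prod f f ` r)"
proof (rule transI)
  fix x y z
  assume "(x, y) \<in> map_prod f f ` r" and "(y, z) \<in> map_prod f f ` r"
  then obtain a b b' c where ab: "(a, b) \<in> r" "x = f a" "y = f b"
    and bc: "(b', c) \<in> r" "y = f b'" "z = f c"
    by auto
  have "b = b'"
    using assms(1,2) ab bc by (auto dest: inj_onD)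
  then show "(x, z) \<in> map_prod f f ` r"
    using assms(3) ab bc by (auto dest: transD)
qed

definition written_value_order ::
    "(event list \<Rightarrow> nat \<Rightarrow> (nat \<times> nat) set) \<Rightarrow> event list \<Rightarrow> nat \<Rightarrow> nat rel" where
  "written_value_order \<Omega> \<tau> j =
     map_prod (\<lambda>p. dat (\<tau> ! p)) (\<lambda>p. dat (\<tau> ! p)) ` Restr (\<Omega> \<tau> j) (Lw \<tau> j)"

definition value_order ::
    "(event list \<Rightarrow> nat \<Rightarrow> (nat \<times> nat) set) \<Rightarrow> event list \<Rightarrow> nat \<Rightarrow> nat rel" where
  "value_order \<Omega> \<tau> j = with_bottom 0 (written_value_order \<Omega> \<tau> j)"

lemma Omega_e_eq_Restr_lex_value_order:
  "Omega_e \<Omega> \<tau> j =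
     Restr (inv_image (value_order \<Omega> \<tau> j <*lex*> {(W, R)}) (\<lambda>p. (dat (\<tau> ! p), opr (\<tau> ! p))))
       (Lpos \<tau> j)"
  unfolding Omega_e_def value_order_def with_bottom_def written_value_order_def
  by (rule set_eqI, clarsimp simp: map_prod_image_iff) blast

lemma inj_on_dat_Lw: "unambiguous \<tau> \<Longrightarrow> inj_on (\<lambda>p. dat (\<tau> ! p)) (Lw \<tau> j)"
  unfolding unambiguous_def by (blast intro: inj_onI)

lemma zero_notin_Range_written_value_order:
  "unambiguous \<tau> \<Longrightarrow> 0 \<notin> Range (written_value_order \<Omega> \<tau> j)"
  unfolding unambiguous_def written_value_order_def by force

lemma strict_order_value_order:
  assumes "unambiguous \<tau>" and "irrefl (\<Omega> \<tau> j)" and "trans (\<Omega> \<tau> j)"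
  shows "irrefl (value_order \<Omega> \<tau> j)" and "trans (value_order \<Omega> \<tau> j)"
proof -
  have inj: "inj_on (\<lambda>p. dat (\<tau> ! p)) (Lw \<tau> j)"
    using assms(1) by (rule inj_on_dat_Lw)
  have restricted: "Restr (\<Omega> \<tau> j) (Lw \<tau> j) \<subseteq> Lw \<tau> j \<times> Lw \<tau> j" by blast
  show "irrefl (value_order \<Omega> \<tau> j)"
    unfolding value_order_def written_value_order_def
    by (intro irrefl_with_bottom irrefl_map_prod_image[OF inj restricted] irrefl_Restr assms(2))
  show "trans (value_order \<Omega> \<tau> j)"
    using zero_notin_Range_written_value_order[OF assms(1)]
    unfolding value_order_def written_value_order_def
    by (intro trans_with_bottom trans_map_prod_image[OF inj restricted] trans_Restr assms(3))
qed

lemma strict_order_Omega_e: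
  assumes "unambiguous \<tau>" and "irrefl (\<Omega> \<tau> j)" and "trans (\<Omega> \<tau> j)"
  shows "irrefl (Omega_e \<Omega> \<tau> j)" and "trans (Omega_e \<Omega> \<tau> j)"
proof -
  have "irrefl {(W, R)}" "trans {(W, R)}"
    by (auto simp: irrefl_def trans_def)
  then have "irrefl (value_order \<Omega> \<tau> j <*lex*> {(W, R)})"
    and "trans (value_order \<Omega> \<tau> j <*lex*> {(W, R)})"
    using strict_order_value_order[where \<Omega>=\<Omega> and j=j, OF assms] by auto
  then show "irrefl (Omega_e \<Omega> \<tau> j)" and "trans (Omega_e \<Omega> \<tau> j)"
    unfolding Omega_e_eq_Restr_lex_value_order
    by (auto simp: irrefl_def intro!: trans_Restr trans_inv_image)
qed

theorem lemma5p2: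
  fixes S :: "nat \<Rightarrow> nat \<Rightarrow> nat \<Rightarrow> 'i letter list set"
    and I :: "nat \<Rightarrow> nat \<Rightarrow> nat \<Rightarrow> 'i set"
    and \<Omega> :: "event list \<Rightarrow> nat \<Rightarrow> (nat \<times> nat) set"
  assumes "memory_system S I"
    and "causality S"
    and "n \<ge> 1" and "m \<ge> 1" and "v \<ge> 1"
    and "witness S n m v \<Omega>"
    and "\<tau> \<in> traces (S n m v)"
    and "unambiguous \<tau>"
    and "i \<in> {1..m}"
  shows "irrefl_on (Lpos \<tau> i) (Omega_e \<Omega> \<tau> i) \<and> antisym (Omega_e \<Omega> \<tau> i)
         \<and> trans (Omega_e \<Omega> \<tau> i)"
proof -
  have "strict_total_order_on (Lw \<tau> i) (\<Omega> \<tau> i)"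
    using assms(6,7,9) unfolding witness_def by blast
  then have irrefl: "irrefl (Omega_e \<Omega> \<tau> i)" and trans: "trans (Omega_e \<Omega> \<tau> i)"
    using strict_order_Omega_e[OF assms(8)] unfolding strict_total_order_on_def by auto
  then have "antisym (Omega_e \<Omega> \<tau> i)"
    by (simp add: antisym_on_if_asym_on asym_on_iff_irrefl_on_if_trans_on)
  with irrefl trans show ?thesis
    by (auto intro: irrefl_on_subset)
qed

end
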